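(* $\mathsf{AP}(R_2,R_1)=\mathsf{AP}(R_3,R_1)=\mathsf{\Omega(1)}$.
   Context: Tuples in $\{0,1\}^4$ are written as strings $abcd$. The relations $R_1,\dots,R_5\subseteq\{0,1\}^4$ are $R_1=\{0000,1000,0100,1100,1010,0110,1001,0101,0011,1011,0111,1111\}$, $R_2=\{0000,1000,0100,1100,1010,0101,0011,1111\}$, $R_3=\{0000,1100,1010,0101,0011,1011,0111,1111\}$, $R_4=\{0000,1100,1010,0101,0011,1111\}$, $R_5=\{0000,1100,1010,0110,1001,0101,0011,1111\}$. For $R,S\subseteq\{0,1\}^4$, a Boolean function $f\colon\{0,1\}^n\to\{0,1\}$ is analogy-preserving relative to $(R,S)$ if for all $\mathbf{a},\mathbf{b},\mathbf{c},\mathbf{d}\in\{0,1\}^n$ with $(a_i,b_i,c_i,d_i)\in R$ for every $i$ and such that $(f(\mathbf{a}),f(\mathbf{b}),f(\mathbf{c}),x)\in S$ for some $x\in\{0,1\}$, we have $(f(\mathbf{a}),f(\mathbf{b}),f(\mathbf{c}),f(\mathbf{d}))\in S$; $\mathsf{AP}(R,S)$ is the set of all such functions of all arities. $\mathsf{\Omega(1)}$ is the set of all Boolean functions (of all arities) that are constant, a projection, or the negation of a projection. *)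

theory Defs
  imports Main
begin

text \<open>A 4-tuple over {0,1}, written abcd in the paper; 1 = True, 0 = False.\<close>
type_synonym tup4 = "bool \<times> bool \<times> bool \<times> bool"

definition bt :: "nat \<Rightarrow> nat \<Rightarrow> nat \<Rightarrow> nat \<Rightarrow> tup4" where
  "bt a b c d = (a = 1, b = 1, c = 1, d = 1)"

definition R1 :: "tup4 set" where
  "R1 = {bt 0 0 0 0, bt 1 0 0 0, bt 0 1 0 0, bt 1 1 0 0, bt 1 0 1 0, bt 0 1 1 0,
         bt 1 0 0 1, bt 0 1 0 1, bt 0 0 1 1, bt 1 0 1 1, bt 0 1 1 1, bt 1 1 1 1}"

definition R2 :: "tup4 set" where
  "R2 = {bt 0 0 0 0, bt 1 0 0 0, bt 0 1 0 0, bt 1 1 0 0, bt 1 0 1 0, bt 0 1 0 1,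
         bt 0 0 1 1, bt 1 1 1 1}"

definition R3 :: "tup4 set" where
  "R3 = {bt 0 0 0 0, bt 1 1 0 0, bt 1 0 1 0, bt 0 1 0 1, bt 0 0 1 1, bt 1 0 1 1,
         bt 0 1 1 1, bt 1 1 1 1}"

definition R4 :: "tup4 set" where
  "R4 = {bt 0 0 0 0, bt 1 1 0 0, bt 1 0 1 0, bt 0 1 0 1, bt 0 0 1 1, bt 1 1 1 1}"

definition R5 :: "tup4 set" where
  "R5 = {bt 0 0 0 0, bt 1 1 0 0, bt 1 0 1 0, bt 0 1 1 0, bt 1 0 0 1, bt 0 1 0 1,
         bt 0 0 1 1, bt 1 1 1 1}"

text \<open>An n-ary Boolean function is represented by f :: bool list => bool together with
  its arity n; only its values on lists of length n matter.\<close>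

definition AP :: "tup4 set \<Rightarrow> tup4 set \<Rightarrow> nat \<Rightarrow> (bool list \<Rightarrow> bool) \<Rightarrow> bool" where
  "AP R S n f \<longleftrightarrow>
     (\<forall>a b c d. length a = n \<longrightarrow> length b = n \<longrightarrow> length c = n \<longrightarrow> length d = n \<longrightarrow>
        (\<forall>i<n. (a ! i, b ! i, c ! i, d ! i) \<in> R) \<longrightarrow>
        (\<exists>x. (f a, f b, f c, x) \<in> S) \<longrightarrow>
        (f a, f b, f c, f d) \<in> S)"

definition Omega1 :: "nat \<Rightarrow> (bool list \<Rightarrow> bool) \<Rightarrow> bool" where
  "Omega1 n f \<longleftrightarrow>
     (\<exists>v. \<forall>x. length x = n \<longrightarrow> f x = v) \<or>
     (\<exists>i<n. \<forall>x. length x = n \<longrightarrow> f x = x ! i) \<or>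
     (\<exists>i<n. \<forall>x. length x = n \<longrightarrow> f x = (\<not> x ! i))"

end

theory Submission
  imports Defs
begin

text \<open>Since R1 consists exactly of the tuples with p = q \<longrightarrow> r = s, a function in AP(R, R1)
  must satisfy f a = f b \<Longrightarrow> f c = f d along R-related columns. If f is not constant, walking
  from one input to another one coordinate at a time exposes a coordinate i and an input c at
  which flipping coordinate i changes f. For R = R2, R3 the alternating columns (p, \<not>p, p, \<not>p)
  and a neutral constant column let this sensitivity be transferred to any pair of inputs that
  differ at i, so f is x!i or its negation.\<close>

lemma R1_iff: "(p, q, r, s) \<in> R1 \<longleftrightarrow> (p = q \<longrightarrow> r = s)"
  by (cases p; cases q; cases r; cases s) (simp_all add: R1_def bt_def)

lemma AP_R1_iff:
  "AP R R1 n f \<longleftrightarrow>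
    (\<forall>a b c d. length a = n \<longrightarrow> length b = n \<longrightarrow> length c = n \<longrightarrow> length d = n \<longrightarrow>
       (\<forall>i<n. (a ! i, b ! i, c ! i, d ! i) \<in> R) \<longrightarrow> f a = f b \<longrightarrow> f c = f d)"
  unfolding AP_def R1_iff by blast

lemma AP_R1D:
  assumes "AP R R1 n f"
    and "length a = n" "length b = n" "length c = n" "length d = n"
    and "\<And>i. i < n \<Longrightarrow> (a ! i, b ! i, c ! i, d ! i) \<in> R"
    and "f a = f b"
  shows "f c = f d"
  using assms unfolding AP_R1_iff by blast

lemma sensitive_coordinate_exists:
  fixes f :: "bool list \<Rightarrow> bool"
  assumes "length c = n" "length d = n" "f c \<noteq> f d"
  obtains x i where "length x = n" "i < n" "f x \<noteq> f (x[i := \<not> x ! i])"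
proof -
  define h where "h k = take k d @ drop k c" for k
  have step: "h (Suc k) = (h k)[k := d ! k]" if "k < n" for k
    using that assms(1,2)
    by (auto simp: h_def take_Suc_conv_app_nth list_update_append Cons_nth_drop_Suc[symmetric])
  have "\<exists>k<n. f (h k) \<noteq> f (h (Suc k))"
  proof (rule ccontr)
    assume "\<not> ?thesis"
    then have "f (h k) = f c" if "k \<le> n" for k
      using that by (induction k) (auto simp: h_def)
    moreover have "h n = d"
      using assms(1,2) by (simp add: h_def)
    ultimately show False
      using assms(3) by auto
  qed
  then obtain k where k: "k < n" "f (h k) \<noteq> f (h (Suc k))"
    by blast
  have len: "length (h k) = n"
    using k(1) assms(1,2) by (simp add: h_def)
  have "d ! k = (\<not> h k ! k)"
  proof (rule ccontr)
    assume "d ! k \<noteq> (\<not> h k ! k)"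
    then have "h (Suc k) = h k"
      using step[OF k(1)] by simp
    with k(2) show False
      by simp
  qed
  then have "h (Suc k) = (h k)[k := \<not> h k ! k]"
    using step[OF k(1)] by simp
  then show thesis
    using that[OF len k(1)] k(2) by simp
qed

text \<open>The padded pair (c0, d0) keeps the coordinates where c and d differ and puts v
  elsewhere; it is forced apart by (c, d) and in turn forces (x, y) apart.\<close>

lemma AP_R1_separation_transfer:
  assumes ap: "AP R R1 n f"
    and alternating: "\<And>p. (p, \<not> p, p, \<not> p) \<in> R"
    and neutral_left: "\<And>p. (v, v, p, p) \<in> R"
    and neutral_right: "\<And>p q. (p, q, v, v) \<in> R"
    and len: "length c = n" "length d = n" "length x = n" "length y = n"
    and sep: "f c \<noteq> f d"
    and agree: "\<And>i. i < n \<Longrightarrow> c ! i \<noteq> d ! i \<Longrightarrow> x ! i = c ! i \<and> y ! i = d ! i"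
  shows "f x \<noteq> f y"
proof -
  define c0 where "c0 = map (\<lambda>i. if c ! i = d ! i then v else c ! i) [0..<n]"
  define d0 where "d0 = map (\<lambda>i. if c ! i = d ! i then v else d ! i) [0..<n]"
  have len0: "length c0 = n" "length d0 = n"
    by (simp_all add: c0_def d0_def)
  have alt: "(p, q, p, q) \<in> R" if "p \<noteq> q" for p q
    using alternating[of p] that by (cases q) auto
  have "(c0 ! i, d0 ! i, c ! i, d ! i) \<in> R" if "i < n" for i
    using that neutral_left alt by (auto simp: c0_def d0_def)
  then have "f c0 \<noteq> f d0"
    using AP_R1D[OF ap len0 len(1,2)] sep by blast
  moreover have "(x ! i, y ! i, c0 ! i, d0 ! i) \<in> R" if "i < n" for i
    using that neutral_right alt agree by (auto simp: c0_def d0_def)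
  ultimately show ?thesis
    using AP_R1D[OF ap len(3,4) len0] by blast
qed

lemma AP_R1_imp_Omega1:
  assumes ap: "AP R R1 n f"
    and alternating: "\<And>p. (p, \<not> p, p, \<not> p) \<in> R"
    and neutral_left: "\<And>p. (v, v, p, p) \<in> R"
    and neutral_right: "\<And>p q. (p, q, v, v) \<in> R"
  shows "Omega1 n f"
proof (cases "\<exists>c d. length c = n \<and> length d = n \<and> f c \<noteq> f d")
  case False
  then have "\<forall>x. length x = n \<longrightarrow> f x = f (replicate n False)"
    by (metis length_replicate)
  then show ?thesis
    unfolding Omega1_def by blast
next
  case True
  then obtain c i where lc: "length c = n" and i: "i < n"
    and sep: "f c \<noteq> f (c[i := \<not> c ! i])"
    by (metis sensitive_coordinate_exists)
  define d where "d = c[i := \<not> c ! i]"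
  have ld: "length d = n"
    using lc by (simp add: d_def)
  have diff_only_i: "j = i" if "c ! j \<noteq> d ! j" for j
    using that by (metis d_def nth_list_update_neq)
  have di: "d ! i = (\<not> c ! i)"
    using lc i by (simp add: d_def)
  note transfer = AP_R1_separation_transfer[OF ap alternating neutral_left neutral_right]
  have depends_on_i: "f x = ((x ! i = c ! i) = f c)" if lx: "length x = n" for x
  proof (cases "x ! i = c ! i")
    case True
    have "f x \<noteq> f d"
      using transfer[OF lc ld lx ld sep[folded d_def]] diff_only_i True by blast
    then show ?thesis
      using True sep d_def by auto
  next
    case False
    have "f c \<noteq> f x"
      using transfer[OF lc ld lc lx sep[folded d_def]] diff_only_i False di by blast
    then show ?thesis
      using False by auto
  qed
  show ?thesis
  proof (cases "c ! i = f c")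
    case True
    then have "\<forall>x. length x = n \<longrightarrow> f x = x ! i"
      using depends_on_i by auto
    then show ?thesis
      unfolding Omega1_def using i by blast
  next
    case False
    then have "\<forall>x. length x = n \<longrightarrow> f x = (\<not> x ! i)"
      using depends_on_i by auto
    then show ?thesis
      unfolding Omega1_def using i by blast
  qed
qed

lemma Omega1_imp_AP_R1:
  assumes "R \<subseteq> R1" and "Omega1 n f"
  shows "AP R R1 n f"
  unfolding AP_R1_iff
proof (intro allI impI)
  fix a b c d :: "bool list"
  assume len: "length a = n" "length b = n" "length c = n" "length d = n"
    and cols: "\<forall>i<n. (a ! i, b ! i, c ! i, d ! i) \<in> R" and eq: "f a = f b"
  have col_R1: "a ! i = b ! i \<Longrightarrow> c ! i = d ! i" if "i < n" for i
    using cols that assms(1) by (auto simp: R1_iff)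
  from assms(2) show "f c = f d"
    unfolding Omega1_def
  proof (elim disjE exE conjE)
    fix v
    assume "\<forall>x. length x = n \<longrightarrow> f x = v"
    then show ?thesis
      using len by simp
  next
    fix i
    assume "i < n" and "\<forall>x. length x = n \<longrightarrow> f x = x ! i"
    then show ?thesis
      using len eq col_R1 by simp
  next
    fix i
    assume "i < n" and "\<forall>x. length x = n \<longrightarrow> f x = (\<not> x ! i)"
    then show ?thesis
      using len eq col_R1 by simp
  qed
qed

lemma R2_subset_R1: "R2 \<subseteq> R1"
  and R3_subset_R1: "R3 \<subseteq> R1"
  by (auto simp: R1_def R2_def R3_def bt_def)

lemma R2_alternating: "(p, \<not> p, p, \<not> p) \<in> R2"
  and R2_neutral_left: "(False, False, p, p) \<in> R2"
  and R2_neutral_right: "(p, q, False, False) \<in> R2"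
  by (cases p; cases q; simp add: R2_def bt_def)+

lemma R3_alternating: "(p, \<not> p, p, \<not> p) \<in> R3"
  and R3_neutral_left: "(True, True, p, p) \<in> R3"
  and R3_neutral_right: "(p, q, True, True) \<in> R3"
  by (cases p; cases q; simp add: R3_def bt_def)+

theorem mainTheorem13:
  fixes n :: nat and f :: "bool list \<Rightarrow> bool"
  shows "(AP R2 R1 n f \<longleftrightarrow> AP R3 R1 n f) \<and> (AP R3 R1 n f \<longleftrightarrow> Omega1 n f)"
proof -
  have R2: "AP R2 R1 n f \<longleftrightarrow> Omega1 n f"
    using AP_R1_imp_Omega1[OF _ R2_alternating R2_neutral_left R2_neutral_right]
      Omega1_imp_AP_R1[OF R2_subset_R1] by blast
  have R3: "AP R3 R1 n f \<longleftrightarrow> Omega1 n f"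
    using AP_R1_imp_Omega1[OF _ R3_alternating R3_neutral_left R3_neutral_right]
      Omega1_imp_AP_R1[OF R3_subset_R1] by blast
  from R2 R3 show ?thesis
    by blast
qed

end
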